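(* Let $r\in\mathbb{Z}$ and let $P_{n,k}(r)=[x^n]\,\frac{1+rx^2}{1+x^2}\left(\frac{x}{1+x^2}\right)^k$ for $n,k\ge 0$. Then for all $n\ge 0$, $$P_{2n,n}(r)=0^n-(r-3)(-1)^{\frac{n}{2}}\binom{\frac{3n}{2}-1}{\frac{n}{2}-1}\frac{1+(-1)^n}{2},$$ and alternatively $$P_{2n,n}(r)=(r-2)\,0^n -(r-3)(-1)^{\frac{n}{2}}\binom{\frac{3n}{2}-1}{n}\frac{1+(-1)^n}{2},$$ where the terms carrying the factor $\frac{1+(-1)^n}{2}$ are interpreted as $0$ when $n$ is odd.
   Context: $[x^n]h(x)$ denotes the coefficient of $x^n$ in $h(x)$. $0^m$ equals $1$ if $m=0$ and $0$ otherwise. For integers $a$ and $k$, $\binom{a}{k}=\frac{a(a-1)\cdots(a-k+1)}{k!}$ if $k\ge 0$ and $\binom{a}{k}=0$ if $k<0$ (so $\binom{-1}{-1}=0$, $\binom{-1}{0}=1$). The $P_{n,k}(r)$ form the coefficient array of the restricted Chebyshev–Boubaker polynomials $P_n(x;r)=\sum_k P_{n,k}(r)x^k$. *)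

theory Defs
  imports "HOL-Computational_Algebra.Formal_Power_Series"
begin

definition P :: "nat \<Rightarrow> nat \<Rightarrow> int \<Rightarrow> rat" where
  "P n k r = fps_nth ((1 + fps_const (of_int r) * fps_X ^ 2) / (1 + fps_X ^ 2)
                        * (fps_X / (1 + fps_X ^ 2)) ^ k) n"

definition gbinom :: "int \<Rightarrow> int \<Rightarrow> rat" where
  "gbinom a k = (if k < 0 then 0 else (of_int a :: rat) gchoose (nat k))"

end

theory Submission
  imports Defs
begin

text \<open>Since \<open>(x/(1+x\<^sup>2))\<^sup>n = x\<^sup>n/(1+x\<^sup>2)\<^sup>n\<close>, \<open>P(2n, n)\<close> is the \<open>x\<^sup>n\<close>-coefficient
  of \<open>(1 + r x\<^sup>2)/(1+x\<^sup>2)\<^sup>n\<^sup>+\<^sup>1\<close>. The negative binomial series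
  \<open>1/(1+x\<^sup>2)\<^sup>N = \<Sum>\<^sub>j (-1)\<^sup>j binom(N+j-1, j) x\<^sup>2\<^sup>j\<close> makes this explicit: it vanishes for
  odd \<open>n\<close>, and for \<open>n = 2m > 0\<close> it is \<open>(-1)\<^sup>m (binom(3m, m) - r binom(3m-1, m-1))\<close>,
  which is \<open>-(r-3)(-1)\<^sup>m binom(3m-1, m-1)\<close> because \<open>binom(3m, m) = 3 binom(3m-1, m-1)\<close>.
  The second form uses \<open>binom(3m-1, 2m) = binom(3m-1, m-1)\<close>.\<close>

definition inverse_one_plus_X2_power :: "nat \<Rightarrow> 'a::field fps" where
  "inverse_one_plus_X2_power N = Abs_fps (\<lambda>k.
     if even k then (-1) ^ (k div 2) * of_nat ((N + k div 2 - 1) choose (k div 2)) else 0)"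

lemma fps_nth_inverse_one_plus_X2_power:
  "fps_nth (inverse_one_plus_X2_power N) k =
     (if even k then (-1) ^ (k div 2) * of_nat ((N + k div 2 - 1) choose (k div 2)) else 0)"
  by (simp add: inverse_one_plus_X2_power_def)

lemma fps_nth_one_plus_cX2_mult:
  fixes G :: "'a::comm_ring_1 fps"
  shows "fps_nth ((1 + fps_const c * fps_X ^ 2) * G) k
           = fps_nth G k + c * (if k < 2 then 0 else fps_nth G (k - 2))"
  by (simp add: distrib_right mult.assoc fps_X_power_mult_nth)

lemma inverse_one_plus_X2_power_0: "inverse_one_plus_X2_power 0 = 1"
proof (rule fps_ext)
  fix k
  show "fps_nth (inverse_one_plus_X2_power 0) k = fps_nth (1 :: 'a fps) k"
    by (cases "k = 0")
      (auto simp: fps_nth_inverse_one_plus_X2_power binomial_eq_0 elim!: evenE)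
qed

lemma inverse_one_plus_X2_power_Suc:
  "(1 + fps_X ^ 2) * inverse_one_plus_X2_power (Suc N)
     = (inverse_one_plus_X2_power N :: 'a::field fps)"
proof (rule fps_ext)
  fix k
  have step: "fps_nth ((1 + fps_X ^ 2) * inverse_one_plus_X2_power (Suc N)) k
      = fps_nth (inverse_one_plus_X2_power (Suc N) :: 'a fps) k
        + (if k < 2 then 0 else fps_nth (inverse_one_plus_X2_power (Suc N) :: 'a fps) (k - 2))"
    by (simp add: distrib_right fps_X_power_mult_nth)
  show "fps_nth ((1 + fps_X ^ 2) * inverse_one_plus_X2_power (Suc N)) k
        = fps_nth (inverse_one_plus_X2_power N :: 'a fps) k"
  proof (cases "even k")
    case True
    then obtain j where k: "k = 2 * j" by (auto elim!: evenE)
    show ?thesis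
    proof (cases j)
      case 0
      then show ?thesis
        unfolding step using k by (simp add: fps_nth_inverse_one_plus_X2_power)
    next
      case (Suc i)
      have "k - 2 = 2 * i" using k Suc by simp
      moreover have "(N + j choose j) = (N + i choose i) + (N + j - 1 choose j)"
        using Suc by simp
      ultimately show ?thesis
        unfolding step using k Suc
        by (simp add: fps_nth_inverse_one_plus_X2_power algebra_simps)
    qed
  next
    case False
    then show ?thesis unfolding step by (simp add: fps_nth_inverse_one_plus_X2_power)
  qed
qed

lemma inverse_one_plus_X2_power_eq:
  "inverse ((1 + fps_X ^ 2) ^ N) = (inverse_one_plus_X2_power N :: 'a::field fps)"
proof (rule fps_inverse_unique)
  show "(1 + fps_X ^ 2) ^ N * inverse_one_plus_X2_power N = (1 :: 'a fps)"
  proof (induction N)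
    case 0
    then show ?case by (simp add: inverse_one_plus_X2_power_0)
  next
    case (Suc N)
    have "(1 + fps_X ^ 2) ^ Suc N * inverse_one_plus_X2_power (Suc N)
        = (1 + fps_X ^ 2) ^ N * ((1 + fps_X ^ 2) * inverse_one_plus_X2_power (Suc N) :: 'a fps)"
      by (simp add: mult_ac)
    then show ?case
      using Suc.IH by (simp only: inverse_one_plus_X2_power_Suc)
  qed
qed

lemma P_diagonal_eq_coefficient:
  "P (2 * n) n r
     = fps_nth ((1 + fps_const (of_int r) * fps_X ^ 2) * inverse_one_plus_X2_power (Suc n)) n"
proof -
  let ?I = "inverse (1 + fps_X ^ 2 :: rat fps)"
  let ?R = "1 + fps_const (of_int r) * fps_X ^ 2 :: rat fps"
  have "?R / (1 + fps_X ^ 2) * (fps_X / (1 + fps_X ^ 2)) ^ n = ?R * ?I * (fps_X * ?I) ^ n"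
    using fps_divide_unit[of "1 + fps_X ^ 2 :: rat fps"] by simp
  also have "\<dots> = fps_X ^ n * (?R * ?I ^ Suc n)"
    by (simp add: power_mult_distrib algebra_simps)
  also have "?I ^ Suc n = inverse_one_plus_X2_power (Suc n)"
    by (metis inverse_one_plus_X2_power_eq fps_inverse_power)
  finally show ?thesis
    unfolding P_def by (simp add: fps_X_power_mult_nth)
qed

lemma P_diagonal_odd: "odd n \<Longrightarrow> P (2 * n) n r = 0"
  by (auto simp: P_diagonal_eq_coefficient fps_nth_one_plus_cX2_mult
                 fps_nth_inverse_one_plus_X2_power odd_pos)

lemma P_diagonal_0: "P 0 0 r = 1"
  using P_diagonal_eq_coefficient[of 0 r]
  by (simp add: fps_nth_one_plus_cX2_mult fps_nth_inverse_one_plus_X2_power)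

lemma choose_mul_Suc: "(k * Suc m choose Suc m) = k * (k * Suc m - 1 choose m)"
proof -
  have "Suc m * (k * Suc m choose Suc m) = k * Suc m * (k * Suc m - 1 choose m)"
    using times_binomial_minus1_eq[of "Suc m" "k * Suc m"] by simp
  also have "\<dots> = Suc m * (k * (k * Suc m - 1 choose m))"
    by (simp only: mult.assoc mult.left_commute)
  finally show ?thesis
    by (rule mult_left_cancel[OF Suc_not_Zero, THEN iffD1])
qed

lemma P_diagonal_even:
  assumes "n = 2 * Suc m"
  shows "P (2 * n) n r = - of_int (r - 3) * ((-1) ^ Suc m * of_nat (3 * Suc m - 1 choose m))"
proof -
  have "P (2 * n) n r
      = (-1) ^ Suc m * of_nat (3 * Suc m choose Suc m)
        + of_int r * ((-1) ^ m * of_nat (3 * Suc m - 1 choose m))"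
    unfolding P_diagonal_eq_coefficient fps_nth_one_plus_cX2_mult
      fps_nth_inverse_one_plus_X2_power
    using assms by (simp add: algebra_simps numeral_3_eq_3)
  also have "\<dots> = - of_int (r - 3) * ((-1) ^ Suc m * of_nat (3 * Suc m - 1 choose m))"
    unfolding choose_mul_Suc[of 3] by (simp add: algebra_simps)
  finally show ?thesis .
qed

lemma gbinom_of_nat: "gbinom (int a) (int b) = of_nat (a choose b)"
  unfolding gbinom_def by (simp add: binomial_gbinomial[symmetric])

lemma choose_three_mul_Suc_minus_one_symmetric:
  "(3 * Suc m - 1 choose (2 * Suc m)) = (3 * Suc m - 1 choose m)"
proof -
  have "(3 * Suc m - 1 choose (2 * Suc m)) = (3 * Suc m - 1 choose (3 * Suc m - 1 - 2 * Suc m))"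
    by (rule binomial_symmetric) simp
  also have "3 * Suc m - 1 - 2 * Suc m = m" by simp
  finally show ?thesis .
qed

theorem mainTheorem3:
  fixes r :: int and n :: nat
  shows "P (2*n) n r = (0::rat)^n - of_int (r - 3) *
            (if even n then (-1)^(n div 2) * gbinom (3 * int (n div 2) - 1) (int (n div 2) - 1) else 0)
       \<and> P (2*n) n r = of_int (r - 2) * (0::rat)^n - of_int (r - 3) *
            (if even n then (-1)^(n div 2) * gbinom (3 * int (n div 2) - 1) (int n) else 0)"
proof -
  consider (odd) "odd n" | (zero) "n = 0" | (even) m where "n = 2 * Suc m"
  proof (cases "even n")
    case True
    then obtain k where "n = 2 * k" by (rule evenE)
    then show ?thesis using that by (cases k) simp_all
  qed (use that in blast)
  then show ?thesis
  proof cases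
    case odd
    then show ?thesis using P_diagonal_odd[of n r] by (auto simp: odd_pos)
  next
    case zero
    then show ?thesis using P_diagonal_0[of r] by (simp add: gbinom_def)
  next
    case even
    have indices: "3 * int (n div 2) - 1 = int (3 * Suc m - 1)"
        "int (n div 2) - 1 = int m" "int n = int (2 * Suc m)"
      using even by simp_all
    have "even n" "n \<noteq> 0" "n div 2 = Suc m"
      using even by simp_all
    then show ?thesis
      unfolding P_diagonal_even[OF even] indices gbinom_of_nat
        choose_three_mul_Suc_minus_one_symmetric
      by (simp add: power_0_left algebra_simps)
  qed
qed

end
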